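(* Let $G$ be a group and $K$ a finite index subgroup of $G$. Suppose $\tilde K\le K$ is a finite index subgroup, $\phi:\tilde K\to K$ is a homomorphism and $X$ is a transversal of $\tilde K$ in $K$ such that the action of $K$ on $X^*$ associated to $(K,\tilde K,\phi,X)$ is faithful. Let $\tilde\phi:\tilde K\to G$ be the composition of $\phi$ with the inclusion $K\hookrightarrow G$, and let $Y$ be a transversal of $\tilde K$ in $G$. Then the action of $G$ on the tree $Y^*$ associated to $(G,\tilde K,\tilde\phi,Y)$ is a faithful self-similar action.
   Context: Construction of the action associated to a quadruple $(\Gamma,L,\psi,Z)$: $\Gamma$ is a group, $L\le\Gamma$ of finite index, $\psi:L\to\Gamma$ a homomorphism (a virtual endomorphism), and $Z$ a set of representatives of the left cosets $zL$ of $L$ in $\Gamma$. For $g\in\Gamma$ and $z\in Z$ let $z'\in Z$ be the representative with $gzL=z'L$, so $z'^{-1}gz\in L$. The associated action of $\Gamma$ on the rooted tree with vertex set $Z^*$ (finite words over $Z$) is defined recursively on word length by $g(\varnothing)=\varnothing$ and $g(zw)=z'\,\big(\psi(z'^{-1}gz)\big)(w)$. It is an action by tree automorphisms in which every state of (the image of) each element is again (the image of) an element of $\Gamma$, i.e. it is self-similar; its kernel is the $\psi$-core of $L$, i.e. the largest subgroup $M\le L$ with $\psi(M)\le M$ that is normal in $\Gamma$, which equals $\bigcap_{m\ge1}\bigcap_{g\in\Gamma}g^{-1}\mathrm{Dom}(\psi^m)g$. *)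

theory Defs
  imports "HOL-Algebra.Algebra"
begin

definition finite_index_subgroup :: "('a, 'b) monoid_scheme \<Rightarrow> 'a set \<Rightarrow> bool" where
  "finite_index_subgroup G L \<longleftrightarrow>
     subgroup L G \<and> finite {g <#\<^bsub>G\<^esub> L | g. g \<in> carrier G}"

definition left_transversal :: "('a, 'b) monoid_scheme \<Rightarrow> 'a set \<Rightarrow> 'a set \<Rightarrow> bool" where
  "left_transversal G L Z \<longleftrightarrow>
     Z \<subseteq> carrier G \<and> (\<forall>g \<in> carrier G. \<exists>!z. z \<in> Z \<and> g \<in> z <#\<^bsub>G\<^esub> L)"

definition coset_rep :: "('a, 'b) monoid_scheme \<Rightarrow> 'a set \<Rightarrow> 'a set \<Rightarrow> 'a \<Rightarrow> 'a" where
  "coset_rep G L Z x = (THE z. z \<in> Z \<and> x \<in> z <#\<^bsub>G\<^esub> L)"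

fun assoc_act :: "('a, 'b) monoid_scheme \<Rightarrow> 'a set \<Rightarrow> ('a \<Rightarrow> 'a) \<Rightarrow> 'a set \<Rightarrow> 'a \<Rightarrow> 'a list \<Rightarrow> 'a list" where
  "assoc_act G L psi Z g [] = []"
| "assoc_act G L psi Z g (z # w) =
     (let z' = coset_rep G L Z (g \<otimes>\<^bsub>G\<^esub> z)
      in z' # assoc_act G L psi Z (psi (inv\<^bsub>G\<^esub> z' \<otimes>\<^bsub>G\<^esub> g \<otimes>\<^bsub>G\<^esub> z)) w)"

text \<open>alpha is an action of G by automorphisms of the rooted tree Z^* :
  length- and prefix-preserving maps of words, forming a group action.\<close>
definition tree_action :: "('a, 'b) monoid_scheme \<Rightarrow> 'c set \<Rightarrow> ('a \<Rightarrow> 'c list \<Rightarrow> 'c list) \<Rightarrow> bool" where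
  "tree_action G Z \<alpha> \<longleftrightarrow>
     (\<forall>g \<in> carrier G. \<forall>w \<in> lists Z. \<alpha> g w \<in> lists Z \<and> length (\<alpha> g w) = length w) \<and>
     (\<forall>g \<in> carrier G. \<forall>v \<in> lists Z. \<forall>w \<in> lists Z. take (length v) (\<alpha> g (v @ w)) = \<alpha> g v) \<and>
     (\<forall>w \<in> lists Z. \<alpha> \<one>\<^bsub>G\<^esub> w = w) \<and>
     (\<forall>g \<in> carrier G. \<forall>h \<in> carrier G. \<forall>w \<in> lists Z. \<alpha> (g \<otimes>\<^bsub>G\<^esub> h) w = \<alpha> g (\<alpha> h w))"

text \<open>Self-similarity: every state (section) of every element is again (the image of) an element.\<close>
definition self_similar :: "('a, 'b) monoid_scheme \<Rightarrow> 'c set \<Rightarrow> ('a \<Rightarrow> 'c list \<Rightarrow> 'c list) \<Rightarrow> bool" where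
  "self_similar G Z \<alpha> \<longleftrightarrow>
     (\<forall>g \<in> carrier G. \<forall>v \<in> lists Z. \<exists>h \<in> carrier G.
        \<forall>w \<in> lists Z. \<alpha> g (v @ w) = \<alpha> g v @ \<alpha> h w)"

definition faithful_tree_action :: "('a, 'b) monoid_scheme \<Rightarrow> 'c set \<Rightarrow> ('a \<Rightarrow> 'c list \<Rightarrow> 'c list) \<Rightarrow> bool" where
  "faithful_tree_action G Z \<alpha> \<longleftrightarrow>
     (\<forall>g \<in> carrier G. (\<forall>w \<in> lists Z. \<alpha> g w = w) \<longrightarrow> g = \<one>\<^bsub>G\<^esub>)"

end

theory Submission
  imports Defs
begin

text \<open>
  Let N be the kernel of the action of G on Y*. It is normal in G, and the section of n \<in> N
  at a letter y \<in> Y is \<phi>(y^-1 n y), which again lies in N; taking for y the representative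
  of the coset Kt itself and using normality gives N \<subseteq> Kt and \<phi>(N) \<subseteq> N.
  Conversely any subgroup of Kt that is normal in K and \<phi>-invariant acts trivially on XK*:
  for x \<in> XK and m in it the coset m x Kt is x Kt, and the section is \<phi>(x^-1 m x).
  So N lies in the kernel of the faithful action of K on XK*, i.e. N is trivial.
\<close>

locale associated_action = group G for G (structure) and L psi Z +
  assumes subgroup_L: "subgroup L G"
    and transversal: "left_transversal G L Z"
    and psi_hom: "psi \<in> hom (G\<lparr>carrier := L\<rparr>) G"
begin

abbreviation "act \<equiv> assoc_act G L psi Z"
abbreviation "rep \<equiv> coset_rep G L Z"

definition transfer :: "'a \<Rightarrow> 'a \<Rightarrow> 'a" where
  "transfer g z = inv (rep (g \<otimes> z)) \<otimes> g \<otimes> z"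

definition act_kernel :: "'a set" where
  "act_kernel = {g \<in> carrier G. \<forall>w \<in> lists Z. act g w = w}"

lemma transversal_subset: "Z \<subseteq> carrier G"
  using transversal unfolding left_transversal_def by blast

lemma L_subset: "L \<subseteq> carrier G"
  by (rule subgroup.subset[OF subgroup_L])

lemma psi_closed: "x \<in> L \<Longrightarrow> psi x \<in> carrier G"
  using hom_in_carrier[OF psi_hom] by simp

lemma psi_mult: "x \<in> L \<Longrightarrow> y \<in> L \<Longrightarrow> psi (x \<otimes> y) = psi x \<otimes> psi y"
  using hom_mult[OF psi_hom] by simp

lemma psi_one: "psi \<one> = \<one>"
  using hom_one[OF psi_hom subgroup_imp_group[OF subgroup_L] is_group] by simp

lemma mem_l_coset_iff:
  assumes "g \<in> carrier G" "z \<in> carrier G"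
  shows "g \<in> z <# L \<longleftrightarrow> inv z \<otimes> g \<in> L"
proof
  assume "g \<in> z <# L"
  then obtain h where "h \<in> L" "g = z \<otimes> h" unfolding l_coset_def by blast
  then show "inv z \<otimes> g \<in> L"
    using assms L_subset by (auto simp: m_assoc [symmetric])
next
  assume "inv z \<otimes> g \<in> L"
  then show "g \<in> z <# L"
    by (rule subgroup.lcos_module_rev[OF subgroup_L is_group assms(2,1)])
qed

lemma coset_rep_unique:
  assumes "g \<in> carrier G"
  shows "\<exists>!z. z \<in> Z \<and> inv z \<otimes> g \<in> L"
proof -
  have "\<exists>!z. z \<in> Z \<and> g \<in> z <# L"
    using transversal assms unfolding left_transversal_def by blast
  then show ?thesis
    using mem_l_coset_iff assms transversal_subset by (metis subsetD)
qed

lemma coset_rep_eq_The: "g \<in> carrier G \<Longrightarrow> rep g = (THE z. z \<in> Z \<and> inv z \<otimes> g \<in> L)"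
  unfolding coset_rep_def
  using mem_l_coset_iff transversal_subset by (metis subsetD)

lemma coset_rep:
  assumes "g \<in> carrier G"
  shows "rep g \<in> Z" and "inv (rep g) \<otimes> g \<in> L"
  using theI'[OF coset_rep_unique[OF assms]] coset_rep_eq_The[OF assms] by simp_all

lemma coset_rep_eq:
  assumes "g \<in> carrier G" "z \<in> Z" "inv z \<otimes> g \<in> L"
  shows "rep g = z"
  using the1_equality[OF coset_rep_unique[OF assms(1)]] assms coset_rep_eq_The by simp

lemma coset_rep_closed: "g \<in> carrier G \<Longrightarrow> rep g \<in> carrier G"
  using coset_rep(1) transversal_subset by blast

lemma transfer_in_L: "g \<in> carrier G \<Longrightarrow> z \<in> Z \<Longrightarrow> transfer g z \<in> L"
  unfolding transfer_def
  using coset_rep(2)[of "g \<otimes> z"] transversal_subset coset_rep_closed[of "g \<otimes> z"]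
  by (auto simp: m_assoc)

lemma act_Cons [simp]: "act g (z # w) = rep (g \<otimes> z) # act (psi (transfer g z)) w"
  by (simp add: transfer_def Let_def)

declare assoc_act.simps(2) [simp del]

lemma act_in_lists:
  "g \<in> carrier G \<Longrightarrow> w \<in> lists Z \<Longrightarrow> act g w \<in> lists Z \<and> length (act g w) = length w"
proof (induction w arbitrary: g)
  case (Cons z w)
  then have "psi (transfer g z) \<in> carrier G"
    using transfer_in_L psi_closed by simp
  with Cons show ?case
    using coset_rep(1) transversal_subset by auto
qed simp

lemma act_prefix: "take (length v) (act g (v @ w)) = act g v"
  by (induction v arbitrary: g) simp_all

lemma coset_rep_self: "z \<in> Z \<Longrightarrow> rep z = z"
  using coset_rep_eq transversal_subset subgroup.one_closed[OF subgroup_L] by auto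

lemma act_one: "w \<in> lists Z \<Longrightarrow> act \<one> w = w"
proof (induction w)
  case (Cons z w)
  then have "z \<in> carrier G" using transversal_subset by auto
  with Cons show ?case
    by (simp add: transfer_def coset_rep_self psi_one)
qed simp

lemma transfer_mult:
  assumes g: "g \<in> carrier G" and h: "h \<in> carrier G" and z: "z \<in> Z"
  shows "rep (g \<otimes> h \<otimes> z) = rep (g \<otimes> rep (h \<otimes> z))"
    and "transfer (g \<otimes> h) z = transfer g (rep (h \<otimes> z)) \<otimes> transfer h z"
proof -
  define z1 where "z1 = rep (h \<otimes> z)"
  define z2 where "z2 = rep (g \<otimes> z1)"
  have zc: "z \<in> carrier G" using z transversal_subset by blast
  have z1: "z1 \<in> Z" "z1 \<in> carrier G" using z1_def coset_rep coset_rep_closed h zc by auto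
  have z2: "z2 \<in> Z" "z2 \<in> carrier G" using z2_def coset_rep coset_rep_closed g z1 by auto
  have cancel: "z1 \<otimes> (inv z1 \<otimes> (h \<otimes> z)) = h \<otimes> z"
    using z1 h zc by (simp add: m_assoc [symmetric])
  have prod: "transfer g z1 \<otimes> transfer h z = inv z2 \<otimes> (g \<otimes> h \<otimes> z)"
    unfolding transfer_def z1_def [symmetric] z2_def [symmetric]
    using z1 z2 zc g h by (simp add: m_assoc cancel)
  moreover have "transfer g z1 \<otimes> transfer h z \<in> L"
    using transfer_in_L g h z z1 subgroup.m_closed[OF subgroup_L] by blast
  ultimately have z2_rep: "rep (g \<otimes> h \<otimes> z) = z2"
    using coset_rep_eq z2 g h zc by simp
  then show "rep (g \<otimes> h \<otimes> z) = rep (g \<otimes> rep (h \<otimes> z))"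
    unfolding z2_def z1_def .
  show "transfer (g \<otimes> h) z = transfer g (rep (h \<otimes> z)) \<otimes> transfer h z"
    using prod z2_rep z2 g h zc unfolding transfer_def z1_def [symmetric]
    by (simp add: m_assoc)
qed

lemma act_mult:
  "g \<in> carrier G \<Longrightarrow> h \<in> carrier G \<Longrightarrow> w \<in> lists Z \<Longrightarrow> act (g \<otimes> h) w = act g (act h w)"
proof (induction w arbitrary: g h)
  case (Cons z w)
  then have "transfer g (rep (h \<otimes> z)) \<in> L" "transfer h z \<in> L"
    using transfer_in_L coset_rep(1) transversal_subset by auto
  with Cons show ?case
    using transfer_mult[of g h z] psi_closed
    by (simp add: psi_mult m_assoc)
qed simp

lemma tree_action: "tree_action G Z act"
  unfolding tree_action_def using act_in_lists act_prefix act_one act_mult by auto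

lemma self_similar: "self_similar G Z act"
  unfolding self_similar_def
proof (intro ballI)
  fix g v assume "g \<in> carrier G" "v \<in> lists Z"
  then show "\<exists>h\<in>carrier G. \<forall>w\<in>lists Z. act g (v @ w) = act g v @ act h w"
  proof (induction v arbitrary: g)
    case (Cons z v)
    then have "psi (transfer g z) \<in> carrier G"
      using transfer_in_L psi_closed by simp
    with Cons show ?case by simp
  qed auto
qed

lemma faithful_iff_act_kernel: "faithful_tree_action G Z act \<longleftrightarrow> act_kernel \<subseteq> {\<one>}"
  unfolding faithful_tree_action_def act_kernel_def by auto

lemma act_kernel_conj:
  assumes c: "c \<in> carrier G" and n: "n \<in> act_kernel"
  shows "c \<otimes> n \<otimes> inv c \<in> act_kernel"
proof -
  have nc: "n \<in> carrier G" using n unfolding act_kernel_def by simp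
  have "act (c \<otimes> n \<otimes> inv c) w = w" if w: "w \<in> lists Z" for w
  proof -
    have "act (inv c) w \<in> lists Z" using act_in_lists c w by simp
    then have "act (c \<otimes> n \<otimes> inv c) w = act c (act (inv c) w)"
      using act_mult c nc w n unfolding act_kernel_def by simp
    also have "\<dots> = w"
      using act_mult[of c "inv c" w, symmetric] act_one c w by simp
    finally show ?thesis .
  qed
  then show ?thesis unfolding act_kernel_def using c nc by simp
qed

lemma act_kernel_section:
  assumes n: "n \<in> act_kernel" and z: "z \<in> Z"
  shows "inv z \<otimes> n \<otimes> z \<in> L" and "psi (inv z \<otimes> n \<otimes> z) \<in> act_kernel"
proof -
  have nc: "n \<in> carrier G" and fix_n: "\<And>w. w \<in> lists Z \<Longrightarrow> act n w = w"
    using n unfolding act_kernel_def by auto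
  have "act n [z] = [z]" by (rule fix_n) (simp add: z)
  then have rep_z: "rep (n \<otimes> z) = z" by simp
  then show inL: "inv z \<otimes> n \<otimes> z \<in> L"
    using transfer_in_L[OF nc z] unfolding transfer_def by simp
  have "act (psi (inv z \<otimes> n \<otimes> z)) w = w" if "w \<in> lists Z" for w
    using fix_n[of "z # w"] that z rep_z by (simp add: transfer_def)
  then show "psi (inv z \<otimes> n \<otimes> z) \<in> act_kernel"
    unfolding act_kernel_def using psi_closed[OF inL] by simp
qed

lemma act_kernel_subset_L: "n \<in> act_kernel \<Longrightarrow> n \<in> L"
  and psi_act_kernel: "n \<in> act_kernel \<Longrightarrow> psi n \<in> act_kernel"
proof -
  assume n: "n \<in> act_kernel"
  define z where "z = rep \<one>"
  have z: "z \<in> Z" "z \<in> carrier G" using z_def coset_rep(1) transversal_subset by auto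
  have nc: "n \<in> carrier G" using n unfolding act_kernel_def by simp
  have "inv z \<otimes> (z \<otimes> n \<otimes> inv z) \<otimes> z = n"
    using z nc by (simp add: m_assoc [symmetric]) (simp add: m_assoc)
  then show "n \<in> L" "psi n \<in> act_kernel"
    using act_kernel_section[OF act_kernel_conj[OF z(2) n] z(1)] by simp_all
qed

lemma normal_invariant_subset_act_kernel:
  assumes "M \<subseteq> L"
    and conj_closed: "\<And>c m. c \<in> carrier G \<Longrightarrow> m \<in> M \<Longrightarrow> inv c \<otimes> m \<otimes> c \<in> M"
    and invariant: "\<And>m. m \<in> M \<Longrightarrow> psi m \<in> M"
  shows "M \<subseteq> act_kernel"
proof -
  have "w \<in> lists Z \<Longrightarrow> \<forall>m \<in> M. act m w = w" for w
  proof (induction w)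
    case (Cons z w)
    show ?case
    proof
      fix m assume m: "m \<in> M"
      have zc: "z \<in> carrier G" and mc: "m \<in> carrier G"
        using Cons.prems m \<open>M \<subseteq> L\<close> transversal_subset L_subset by auto
      have "inv z \<otimes> m \<otimes> z \<in> M" using conj_closed zc m .
      then have "inv z \<otimes> (m \<otimes> z) \<in> L" using \<open>M \<subseteq> L\<close> zc mc by (auto simp: m_assoc)
      then have "rep (m \<otimes> z) = z" using coset_rep_eq Cons.prems zc mc by simp
      then show "act m (z # w) = z # w"
        using Cons invariant \<open>inv z \<otimes> m \<otimes> z \<in> M\<close> by (simp add: transfer_def)
    qed
  qed simp
  then show ?thesis
    unfolding act_kernel_def using assms(1) L_subset by auto
qed

end

theorem mainTheorem5:
  fixes G :: "('a, 'b) monoid_scheme"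
    and K Kt XK Y :: "'a set" and phi :: "'a \<Rightarrow> 'a"
  assumes "group G"
    and "finite_index_subgroup G K"
    and "finite_index_subgroup (G\<lparr>carrier := K\<rparr>) Kt"
    and "phi \<in> hom (G\<lparr>carrier := Kt\<rparr>) (G\<lparr>carrier := K\<rparr>)"
    and "left_transversal (G\<lparr>carrier := K\<rparr>) Kt XK"
    and "faithful_tree_action (G\<lparr>carrier := K\<rparr>) XK (assoc_act (G\<lparr>carrier := K\<rparr>) Kt phi XK)"
    and "left_transversal G Kt Y"
  shows "tree_action G Y (assoc_act G Kt phi Y)
       \<and> self_similar G Y (assoc_act G Kt phi Y)
       \<and> faithful_tree_action G Y (assoc_act G Kt phi Y)"
proof -
  interpret group G by fact
  have KG: "subgroup K G" and KtK: "subgroup Kt (G\<lparr>carrier := K\<rparr>)"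
    using assms(2,3) unfolding finite_index_subgroup_def by auto
  have phi_G: "phi \<in> hom (G\<lparr>carrier := Kt\<rparr>) G"
    using assms(4) subgroup.subset[OF KG] unfolding hom_def by auto
  interpret GY: associated_action G Kt phi Y
    using associated_action_axioms.intro[OF incl_subgroup[OF KG KtK] assms(7) phi_G]
    by (intro associated_action.intro is_group)
  interpret KX: associated_action "G\<lparr>carrier := K\<rparr>" Kt phi XK
    using associated_action_axioms.intro[OF KtK assms(5)] assms(4)
    by (intro associated_action.intro subgroup_imp_group[OF KG]) simp
  have "GY.act_kernel \<subseteq> KX.act_kernel"
  proof (rule KX.normal_invariant_subset_act_kernel)
    show "GY.act_kernel \<subseteq> Kt" using GY.act_kernel_subset_L by blast
    fix c m assume c: "c \<in> carrier (G\<lparr>carrier := K\<rparr>)" and m: "m \<in> GY.act_kernel"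
    then have "c \<in> carrier G" using subgroup.subset[OF KG] by auto
    then show "inv\<^bsub>G\<lparr>carrier := K\<rparr>\<^esub> c \<otimes>\<^bsub>G\<lparr>carrier := K\<rparr>\<^esub> m \<otimes>\<^bsub>G\<lparr>carrier := K\<rparr>\<^esub> c \<in> GY.act_kernel"
      using GY.act_kernel_conj[OF inv_closed m] c KG by simp
  next
    show "\<And>m. m \<in> GY.act_kernel \<Longrightarrow> phi m \<in> GY.act_kernel"
      by (rule GY.psi_act_kernel)
  qed
  then have "faithful_tree_action G Y GY.act"
    using assms(6) GY.faithful_iff_act_kernel KX.faithful_iff_act_kernel by auto
  then show ?thesis using GY.tree_action GY.self_similar by simp
qed

end
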